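(* Consider the two-route traffic model described in the context, under assumptions (A1)–(A6). The system has a unique equilibrium $\overline{x}\in\Omega$, and $\overline{x}$ is globally asymptotically stable on $\Omega$ (it is Lyapunov stable and every solution starting in $\Omega$ converges to $\overline{x}$).
   Context: Two routes $i=1,2$ connect an origin to a destination. For each route there are positive parameters $B_i$, $C_i$, $F_i$ with $C_i<B_i$; the demand is a constant $\phi>0$. Set $v_i=F_i/C_i$ and $E_i=v_iB_i$. The state $x=(x_1,x_2)\in\Omega:=[0,B_1]\times[0,B_2]$ evolves by $\dot x_i=\min\{\phi R_i(x),S_i(x_i)\}-D_i(x_i)$, $i=1,2$, with $S_i(x_i)=F_i$ if $x_i<C_i$, $S_i(x_i)=\frac{F_i}{B_i-C_i}(B_i-x_i)$ otherwise; $D_i(x_i)=v_ix_i$ if $x_i<C_i$, $D_i(x_i)=F_i$ otherwise. Routing ratios: $R_i(x)=(1-\alpha)r_i^0+\alpha\, r_i(\tau(x))$, with $\alpha\in(0,1]$, $r_1^0,r_2^0\ge0$, $r_1^0+r_2^0=1$, $\tau(x)=(\tau_1(x_1),\tau_2(x_2))$, each $\tau_i$ $C^1$ and strictly increasing, $0\le r_i(\tau(x))\le1$, $r_1(\tau(x))+r_2(\tau(x))=1$ on $\Omega$, $x\mapsto r_i(\tau(x))$ globally Lipschitz and $C^1$ on $\Omega$. Assumptions: (A1) $\phi<F_1+F_2$; (A2)–(A3) as just listed; (A4) $\partial R_i/\partial\tau_j>0$ for $i\ne j$; (A5) $F_i>(1-\alpha)\phi r_i^0$; (A6) $\phi<E_i$,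 $i=1,2$. *)

theory Defs
  imports "HOL-Analysis.Analysis"
begin

definition supply_fun :: "real \<Rightarrow> real \<Rightarrow> real \<Rightarrow> real \<Rightarrow> real" where
  "supply_fun F B C x = (if x < C then F else F / (B - C) * (B - x))"

text \<open>Demand (outflow) function D_i, with v = F / C.\<close>
definition demand_fun :: "real \<Rightarrow> real \<Rightarrow> real \<Rightarrow> real" where
  "demand_fun F C x = (if x < C then (F / C) * x else F)"

definition Omega :: "real \<Rightarrow> real \<Rightarrow> (real \<times> real) set" where
  "Omega B1 B2 = {0..B1} \<times> {0..B2}"

definition routing :: "real \<Rightarrow> real \<Rightarrow> (real \<times> real \<Rightarrow> real)
    \<Rightarrow> (real \<Rightarrow> real) \<Rightarrow> (real \<Rightarrow> real) \<Rightarrow> real \<times> real \<Rightarrow> real" where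
  "routing \<alpha> r0 r \<tau>1 \<tau>2 x = (1 - \<alpha>) * r0 + \<alpha> * r (\<tau>1 (fst x), \<tau>2 (snd x))"

definition two_route_field ::
  "real \<Rightarrow> real \<Rightarrow> real \<Rightarrow> real \<Rightarrow> real \<Rightarrow> real \<Rightarrow> real
   \<Rightarrow> (real \<times> real \<Rightarrow> real) \<Rightarrow> (real \<times> real \<Rightarrow> real)
   \<Rightarrow> real \<times> real \<Rightarrow> real \<times> real" where
  "two_route_field \<phi> B1 C1 F1 B2 C2 F2 R1 R2 x =
     (min (\<phi> * R1 x) (supply_fun F1 B1 C1 (fst x)) - demand_fun F1 C1 (fst x),
      min (\<phi> * R2 x) (supply_fun F2 B2 C2 (snd x)) - demand_fun F2 C2 (snd x))"

definition is_solution :: "('a::real_normed_vector \<Rightarrow> 'a) \<Rightarrow> 'a set \<Rightarrow> (real \<Rightarrow> 'a) \<Rightarrow> bool" where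
  "is_solution f S x \<longleftrightarrow>
     (\<forall>t\<ge>0. x t \<in> S \<and> (x has_vector_derivative f (x t)) (at t within {0..}))"

end

theory Submission
  imports Defs
begin

(*
  The field is cooperative on Omega: by (A4), route i becomes more attractive when route j
  fills up, so each component f_i is nondecreasing in the other coordinate.  Brouwer's theorem
  gives an equilibrium in free flow, and a flow-balance argument shows that f p >= 0 >= f q
  forces p <= q componentwise; in particular the equilibrium xb is unique.

  Along a solution, the vector L of upper limits of the two components satisfies f L >= 0:
  otherwise, by cooperativity and continuity, one component would drift down at a uniform rate
  whenever it is close to its upper limit.  Symmetrically the vector l of lower limits satisfies
  f l <= 0.  Hence L <= xb <= l, and the solution converges to xb.

  For stability, xb is enclosed in arbitrarily small rectangles whose faces the field crosses
  inwards (faces on the boundary of Omega excepted); such rectangles are forward invariant.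
  Their corners are found near the nullcline of the second component.
*)

section \<open>Differential inequalities on the half-line\<close>

lemma closed_forward_invariant:
  fixes x :: "real \<Rightarrow> 'a::topological_space"
  assumes cont: "continuous_on {t0..} x" and K: "closed K" and start: "x t0 \<in> K"
    and stays: "\<And>s. t0 \<le> s \<Longrightarrow> x s \<in> K \<Longrightarrow> \<forall>\<^sub>F t in at_right s. x t \<in> K"
    and t: "t0 \<le> t"
  shows "x t \<in> K"
proof (rule ccontr)
  assume "x t \<notin> K"
  define S where "S = {s. t0 \<le> s \<and> s \<le> t \<and> x s \<notin> K}"
  define m where "m = Inf S"
  have S: "t \<in> S" "bdd_below S" using \<open>x t \<notin> K\<close> t by (auto simp: S_def bdd_below_def)
  have m: "t0 \<le> m" "m \<le> t" unfolding m_def using S by (auto intro: cInf_greatest cInf_lower simp: S_def)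
  have before: "x s \<in> K" if "t0 \<le> s" "s < m" for s
    using that cInf_lower[OF _ S(2), of s] m by (force simp: S_def m_def)
  have xm: "x m \<in> K"
  proof (cases "t0 = m")
    case False
    have "continuous_on {t0..m} x" using cont by (rule continuous_on_subset) auto
    then have "closed ({t0..m} \<inter> x -` K)" by (rule continuous_closed_preimage) (use K in auto)
    moreover have "{t0..<m} \<subseteq> {t0..m} \<inter> x -` K" using before by auto
    ultimately have "closure {t0..<m} \<subseteq> x -` K" by (meson closure_minimal inf.boundedE)
    then show ?thesis using False m by auto
  qed (use start in simp)
  obtain b where b: "m < b" "\<And>s. m < s \<Longrightarrow> s < b \<Longrightarrow> x s \<in> K"
    using stays[OF m(1) xm] by (auto simp: eventually_at_right_field)
  obtain s where "s \<in> S" "s < b" using cInf_lessD[of S b] S b(1) by (auto simp: m_def)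
  moreover have "m \<le> s" using \<open>s \<in> S\<close> S(2) by (simp add: m_def cInf_lower)
  ultimately show False using b(2)[of s] xm by (cases "s = m") (auto simp: S_def)
qed

lemma eventually_at_right_le_if_deriv_neg:
  fixes u :: "real \<Rightarrow> real"
  assumes u: "(u has_real_derivative D) (at_right s)" and le: "u s \<le> b" and neg: "u s = b \<Longrightarrow> D < 0"
  shows "\<forall>\<^sub>F t in at_right s. u t \<le> b"
proof (cases "u s = b")
  case True
  obtain d where d: "d > 0" "\<And>h. 0 < h \<Longrightarrow> h < d \<Longrightarrow> u (s + h) < u s"
    using has_real_derivative_neg_dec_right[OF u neg[OF True]] by auto
  then show ?thesis
    unfolding eventually_at_right_field
  proof (intro exI[of _ "s + d"] conjI allI impI)
    fix y assume "s < y" "y < s + d"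
    then have "u (s + (y - s)) < u s" using d(2)[of "y - s"] by simp
    then show "u y \<le> b" using True by simp
  qed simp
next
  case False
  have "(u \<longlongrightarrow> u s) (at_right s)" using DERIV_continuous[OF u] by (simp add: continuous_within)
  then have "\<forall>\<^sub>F t in at_right s. u t < b" using False le by (intro order_tendstoD) auto
  then show ?thesis by eventually_elim simp
qed

lemma eventually_at_right_ge_if_deriv_pos:
  fixes u :: "real \<Rightarrow> real"
  assumes "(u has_real_derivative D) (at_right s)" "a \<le> u s" "u s = a \<Longrightarrow> 0 < D"
  shows "\<forall>\<^sub>F t in at_right s. a \<le> u t"
  using eventually_at_right_le_if_deriv_neg[of "\<lambda>t. - u t" "- D" s "- a"] assms
  by (simp add: DERIV_minus)

lemma reaches_le_if_drift_down:
  fixes u u' :: "real \<Rightarrow> real"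
  assumes deriv: "\<And>t. T \<le> t \<Longrightarrow> (u has_real_derivative u' t) (at t)"
    and drift: "\<And>t. T \<le> t \<Longrightarrow> l \<le> u t \<Longrightarrow> u' t \<le> -c" and c: "c > 0"
  shows "\<exists>t\<ge>T. u t \<le> l"
proof (rule ccontr)
  assume "\<not> ?thesis"
  then have above: "l < u t" if "T \<le> t" for t using that by (meson linorder_not_le)
  define s where "s = T + (\<bar>u T - l\<bar> + 1) / c"
  have "T \<le> s" using c by (simp add: s_def)
  have "u s + c * s \<le> u T + c * T"
  proof (rule DERIV_nonpos_imp_nonincreasing[OF \<open>T \<le> s\<close>, of "\<lambda>t. u t + c * t"])
    fix t assume "T \<le> t" "t \<le> s"
    then show "\<exists>y. ((\<lambda>t. u t + c * t) has_real_derivative y) (at t) \<and> y \<le> 0"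
      using drift[of t] above[of t] deriv[of t]
      by (intro exI[of _ "u' t + c"]) (auto intro!: derivative_eq_intros)
  qed
  moreover have "c * (s - T) = \<bar>u T - l\<bar> + 1" using c by (simp add: s_def)
  ultimately have "u s < l" by (simp add: algebra_simps)
  then show False using above[OF \<open>T \<le> s\<close>] by simp
qed

lemma eventually_le_if_drift_down:
  fixes u u' :: "real \<Rightarrow> real"
  assumes deriv: "\<And>t. 0 \<le> t \<Longrightarrow> (u has_real_derivative u' t) (at t within {0..})"
    and drift: "\<forall>\<^sub>F t in at_top. l \<le> u t \<longrightarrow> u' t \<le> -c" and c: "c > 0"
  shows "\<forall>\<^sub>F t in at_top. u t \<le> l"
proof -
  obtain T where T: "T \<ge> 1" "\<And>t. T \<le> t \<Longrightarrow> l \<le> u t \<Longrightarrow> u' t \<le> -c"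
    using drift unfolding eventually_at_top_linorder by (metis max.bounded_iff order_refl)
  have deriv_at: "(u has_real_derivative u' t) (at t)" if "T \<le> t" for t
    using deriv[of t] that T(1) at_within_interior[of t "{0..}"] by simp
  obtain t1 where t1: "T \<le> t1" "u t1 \<le> l" using reaches_le_if_drift_down[OF deriv_at T(2) c] by blast
  have cont: "continuous_on {t1..} u"
  proof (intro continuous_at_imp_continuous_on ballI)
    fix t assume "t \<in> {t1..}"
    then have "T \<le> t" using t1(1) by simp
    then show "isCont u t" by (rule DERIV_isCont[OF deriv_at])
  qed
  \<comment> \<open>once below \<open>l\<close>, the function cannot cross \<open>l\<close> upwards, where its derivative is negative\<close>
  have "u t \<in> {..l}" if "t1 \<le> t" for t
  proof (rule closed_forward_invariant[OF cont closed_atMost _ _ that])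
    show "u t1 \<in> {..l}" using t1(2) by simp
    fix s assume s: "t1 \<le> s" "u s \<in> {..l}"
    have "(u has_real_derivative u' s) (at_right s)"
      using deriv_at[of s] s(1) t1(1) by (auto intro: has_field_derivative_at_within)
    moreover have "u' s < 0" if "u s = l" using T(2)[of s] s(1) t1(1) c that by simp
    ultimately show "\<forall>\<^sub>F t in at_right s. u t \<in> {..l}"
      using s(2) by (simp add: eventually_at_right_le_if_deriv_neg)
  qed
  then show ?thesis unfolding eventually_at_top_linorder by auto
qed

section \<open>Eventual upper and lower limits\<close>

text \<open>For \<open>u\<close> unbounded below the infimum is a junk value; all lemmas assume \<open>u\<close> bounded on \<open>[0, \<infinity>)\<close>.\<close>

definition upper_limit :: "(real \<Rightarrow> real) \<Rightarrow> real" where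
  "upper_limit u = Inf {b. \<forall>\<^sub>F t in at_top. u t \<le> b}"

definition lower_limit :: "(real \<Rightarrow> real) \<Rightarrow> real" where
  "lower_limit u = - upper_limit (\<lambda>t. - u t)"

context
  fixes u :: "real \<Rightarrow> real" and lo hi :: real
  assumes bounded: "u ` {0..} \<subseteq> {lo..hi}"
begin

private lemma eventual_bound_ge: "\<forall>\<^sub>F t in at_top. u t \<le> b \<Longrightarrow> lo \<le> b"
proof -
  assume "\<forall>\<^sub>F t in at_top. u t \<le> b"
  then have "\<forall>\<^sub>F t in at_top. 0 \<le> t \<and> u t \<le> b" by (intro eventually_conj eventually_ge_at_top)
  then obtain t where "0 \<le> t" "u t \<le> b" using eventually_happens'[OF trivial_limit_at_top_linorder] by blast
  then show ?thesis using bounded by auto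
qed

private lemma eventually_le_hi: "\<forall>\<^sub>F t in at_top. u t \<le> hi"
  using eventually_ge_at_top[of 0] by eventually_elim (use bounded in auto)

private lemma bdd_below_eventual_bounds: "bdd_below {b. \<forall>\<^sub>F t in at_top. u t \<le> b}"
  using eventual_bound_ge by (auto simp: bdd_below_def)

lemma upper_limit_le: "\<forall>\<^sub>F t in at_top. u t \<le> b \<Longrightarrow> upper_limit u \<le> b"
  unfolding upper_limit_def by (auto intro: cInf_lower bdd_below_eventual_bounds)

lemma upper_limit_bounds: "upper_limit u \<in> {lo..hi}"
  using eventually_le_hi eventual_bound_ge upper_limit_le
  by (auto simp: upper_limit_def intro!: cInf_greatest)

lemma eventually_le_upper_limit: "e > 0 \<Longrightarrow> \<forall>\<^sub>F t in at_top. u t \<le> upper_limit u + e"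
proof -
  assume "e > 0"
  then obtain b where "\<forall>\<^sub>F t in at_top. u t \<le> b" "b < upper_limit u + e"
    using cInf_lessD[of "{b. \<forall>\<^sub>F t in at_top. u t \<le> b}" "upper_limit u + e"] eventually_le_hi
    unfolding upper_limit_def by auto
  then show ?thesis by (auto elim: eventually_mono)
qed

end

lemma
  fixes u :: "real \<Rightarrow> real"
  assumes bounded: "u ` {0..} \<subseteq> {lo..hi}"
  shows lower_limit_bounds: "lower_limit u \<in> {lo..hi}"
    and eventually_lower_limit_le: "e > 0 \<Longrightarrow> \<forall>\<^sub>F t in at_top. lower_limit u - e \<le> u t"
proof -
  have neg: "(\<lambda>t. - u t) ` {0..} \<subseteq> {-hi..-lo}" using bounded by auto
  show "lower_limit u \<in> {lo..hi}" using upper_limit_bounds[OF neg] by (auto simp: lower_limit_def)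
  show "\<forall>\<^sub>F t in at_top. lower_limit u - e \<le> u t" if "e > 0"
    using eventually_le_upper_limit[OF neg that] unfolding lower_limit_def by (auto elim!: eventually_mono)
qed

lemma tendsto_if_upper_limit_le_lower_limit:
  fixes u :: "real \<Rightarrow> real"
  assumes bounded: "u ` {0..} \<subseteq> {lo..hi}"
    and "upper_limit u \<le> a" "a \<le> lower_limit u"
  shows "(u \<longlongrightarrow> a) at_top"
proof (rule order_tendstoI)
  fix a' assume "a' < a"
  then obtain b where "a' < b" "b < a" using dense by blast
  then have "\<forall>\<^sub>F t in at_top. lower_limit u - (a - b) \<le> u t"
    by (intro eventually_lower_limit_le[OF bounded]) simp
  then show "\<forall>\<^sub>F t in at_top. a' < u t"
    by eventually_elim (use assms(3) \<open>a' < b\<close> in linarith)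
next
  fix a' assume "a < a'"
  then obtain b where "a < b" "b < a'" using dense by blast
  then have "\<forall>\<^sub>F t in at_top. u t \<le> upper_limit u + (b - a)"
    by (intro eventually_le_upper_limit[OF bounded]) simp
  then show "\<forall>\<^sub>F t in at_top. u t < a'"
    by eventually_elim (use assms(2) \<open>b < a'\<close> in linarith)
qed

lemma nonneg_if_deriv_bounded_near_upper_limit:
  fixes u u' :: "real \<Rightarrow> real"
  assumes deriv: "\<And>t. 0 \<le> t \<Longrightarrow> (u has_real_derivative u' t) (at t within {0..})"
    and bounded: "u ` {0..} \<subseteq> {lo..hi}"
    and near: "\<And>e. e > 0 \<Longrightarrow> \<exists>\<delta>>0. \<forall>\<^sub>F t in at_top. upper_limit u - \<delta> \<le> u t \<longrightarrow> u' t < a + e"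
  shows "0 \<le> a"
proof (rule ccontr)
  assume "\<not> 0 \<le> a"
  then obtain \<delta> where "\<delta> > 0" and "\<forall>\<^sub>F t in at_top. upper_limit u - \<delta> \<le> u t \<longrightarrow> u' t < a + - a / 2"
    using near[of "- a / 2"] by auto
  then have "\<forall>\<^sub>F t in at_top. upper_limit u - \<delta> \<le> u t \<longrightarrow> u' t \<le> - (- a / 2)"
    by (auto elim: eventually_mono)
  from eventually_le_if_drift_down[OF deriv this] \<open>\<not> 0 \<le> a\<close>
  have "\<forall>\<^sub>F t in at_top. u t \<le> upper_limit u - \<delta>" by simp
  then show False using upper_limit_le[OF bounded] \<open>\<delta> > 0\<close> by fastforce
qed

lemma nonpos_if_deriv_bounded_near_lower_limit:
  fixes u u' :: "real \<Rightarrow> real"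
  assumes deriv: "\<And>t. 0 \<le> t \<Longrightarrow> (u has_real_derivative u' t) (at t within {0..})"
    and bounded: "u ` {0..} \<subseteq> {lo..hi}"
    and near: "\<And>e. e > 0 \<Longrightarrow> \<exists>\<delta>>0. \<forall>\<^sub>F t in at_top. u t \<le> lower_limit u + \<delta> \<longrightarrow> a - e < u' t"
  shows "a \<le> 0"
proof -
  have "((\<lambda>t. - u t) has_real_derivative - u' t) (at t within {0..})" if "0 \<le> t" for t
    using deriv[OF that] by (rule DERIV_minus)
  moreover have "(\<lambda>t. - u t) ` {0..} \<subseteq> {-hi..-lo}" using bounded by auto
  moreover have "\<exists>\<delta>>0. \<forall>\<^sub>F t in at_top. upper_limit (\<lambda>t. - u t) - \<delta> \<le> - u t \<longrightarrow> - u' t < - a + e"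
    if "e > 0" for e
    using near[OF that] by (auto simp: lower_limit_def elim!: eventually_mono)
  ultimately have "0 \<le> - a" by (rule nonneg_if_deriv_bounded_near_upper_limit)
  then show ?thesis by simp
qed

section \<open>Cooperative systems on a rectangle\<close>

lemma dist_le_abs_fst_plus_abs_snd:
  fixes p q :: "real \<times> real"
  shows "dist p q \<le> \<bar>fst p - fst q\<bar> + \<bar>snd p - snd q\<bar>"
  using norm_Pair_le[of "fst p - fst q" "snd p - snd q"] by (cases p, cases q) (simp add: dist_norm)

lemma mem_Omega_iff: "p \<in> Omega B1 B2 \<longleftrightarrow> fst p \<in> {0..B1} \<and> snd p \<in> {0..B2}"
  by (cases p) (simp add: Omega_def)

lemma is_solution_continuous: "is_solution f S x \<Longrightarrow> continuous_on {0..} x"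
  unfolding is_solution_def continuous_on_eq_continuous_within
  by (meson atLeast_iff has_vector_derivative_continuous)

lemma is_solution_components:
  fixes f :: "real \<times> real \<Rightarrow> real \<times> real"
  assumes "is_solution f S x" "0 \<le> t"
  shows "x t \<in> S"
    and "((\<lambda>t. fst (x t)) has_real_derivative fst (f (x t))) (at t within {0..})"
    and "((\<lambda>t. snd (x t)) has_real_derivative snd (f (x t))) (at t within {0..})"
proof -
  have "x t \<in> S" and x': "(x has_vector_derivative f (x t)) (at t within {0..})"
    using assms unfolding is_solution_def by auto
  then show "x t \<in> S" by simp
  show "((\<lambda>t. fst (x t)) has_real_derivative fst (f (x t))) (at t within {0..})"
    using bounded_linear.has_vector_derivative[OF bounded_linear_fst x']
    by (simp add: has_real_derivative_iff_has_vector_derivative)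
  show "((\<lambda>t. snd (x t)) has_real_derivative snd (f (x t))) (at t within {0..})"
    using bounded_linear.has_vector_derivative[OF bounded_linear_snd x']
    by (simp add: has_real_derivative_iff_has_vector_derivative)
qed

lemma box_forward_invariant:
  fixes f :: "real \<times> real \<Rightarrow> real \<times> real"
  assumes sol: "is_solution f (Omega B1 B2) x" and start: "x 0 \<in> {a..b}"
    and fst_upper: "\<And>p. p \<in> Omega B1 B2 \<Longrightarrow> p \<in> {a..b} \<Longrightarrow> fst p = fst b \<Longrightarrow> fst (f p) < 0"
    and snd_upper: "\<And>p. p \<in> Omega B1 B2 \<Longrightarrow> p \<in> {a..b} \<Longrightarrow> snd p = snd b \<Longrightarrow> snd (f p) < 0"
    and fst_lower: "\<And>p. p \<in> Omega B1 B2 \<Longrightarrow> p \<in> {a..b} \<Longrightarrow> fst p = fst a \<Longrightarrow> 0 < fst a \<Longrightarrow> 0 < fst (f p)"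
    and snd_lower: "\<And>p. p \<in> Omega B1 B2 \<Longrightarrow> p \<in> {a..b} \<Longrightarrow> snd p = snd a \<Longrightarrow> 0 < snd a \<Longrightarrow> 0 < snd (f p)"
    and "0 \<le> t"
  shows "x t \<in> {a..b}"
proof (rule closed_forward_invariant[OF is_solution_continuous[OF sol] _ start _ \<open>0 \<le> t\<close>])
  show "closed {a..b}" by (simp add: atLeastAtMost_prod_eq closed_Times)
  fix s assume s: "0 \<le> s" "x s \<in> {a..b}"
  note in_Omega = is_solution_components(1)[OF sol]
  have "{s<..} \<subseteq> {0..}" using s(1) by auto
  then have d1: "((\<lambda>t. fst (x t)) has_real_derivative fst (f (x s))) (at_right s)"
    and d2: "((\<lambda>t. snd (x t)) has_real_derivative snd (f (x s))) (at_right s)"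
    using is_solution_components(2,3)[OF sol s(1)] by (auto intro: has_field_derivative_subset)
  have bounds: "fst a \<le> fst (x s)" "fst (x s) \<le> fst b" "snd a \<le> snd (x s)" "snd (x s) \<le> snd b"
    using s(2) by (auto simp: less_eq_prod_def)
  note xs = in_Omega[OF s(1)] s(2)
  note faces = fst_upper[OF xs] snd_upper[OF xs] fst_lower[OF xs] snd_lower[OF xs]
  have nonneg: "\<forall>\<^sub>F t in at_right s. 0 \<le> fst (x t) \<and> 0 \<le> snd (x t)"
  proof -
    have "0 \<le> fst (x t) \<and> 0 \<le> snd (x t)" if "s < t" for t
      using in_Omega[of t] that s(1) by (auto simp: mem_Omega_iff)
    then show ?thesis using eventually_at_right_less[of s] by (auto elim: eventually_mono)
  qed
  have "\<forall>\<^sub>F t in at_right s. fst (x t) \<le> fst b"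
    by (rule eventually_at_right_le_if_deriv_neg[OF d1 bounds(2) faces(1)])
  moreover have "\<forall>\<^sub>F t in at_right s. snd (x t) \<le> snd b"
    by (rule eventually_at_right_le_if_deriv_neg[OF d2 bounds(4) faces(2)])
  moreover have "\<forall>\<^sub>F t in at_right s. fst a \<le> fst (x t)"
  proof (cases "0 < fst a")
    case False
    then show ?thesis using nonneg by (auto elim: eventually_mono)
  qed (intro eventually_at_right_ge_if_deriv_pos[OF d1 bounds(1) faces(3)])
  moreover have "\<forall>\<^sub>F t in at_right s. snd a \<le> snd (x t)"
  proof (cases "0 < snd a")
    case False
    then show ?thesis using nonneg by (auto elim: eventually_mono)
  qed (intro eventually_at_right_ge_if_deriv_pos[OF d2 bounds(3) faces(4)])
  ultimately show "\<forall>\<^sub>F t in at_right s. x t \<in> {a..b}"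
    by eventually_elim (auto simp: less_eq_prod_def)
qed

lemma continuous_on_less_near:
  fixes h :: "'a::metric_space \<Rightarrow> real"
  assumes "continuous_on S h" "p \<in> S" "h p < c"
  obtains d where "d > 0" "\<And>y. y \<in> S \<Longrightarrow> dist y p < d \<Longrightarrow> h y < c"
proof -
  obtain d where "d > 0" and d: "\<And>y. y \<in> S \<Longrightarrow> dist y p < d \<Longrightarrow> dist (h y) (h p) < c - h p"
    using assms unfolding continuous_on_iff by (metis diff_gt_0_iff_gt)
  show thesis
  proof (rule that[OF \<open>d > 0\<close>])
    fix y assume "y \<in> S" "dist y p < d"
    then show "h y < c" using d[of y] by (simp add: dist_real_def abs_less_iff)
  qed
qed

lemma continuous_on_greater_near:
  fixes h :: "'a::metric_space \<Rightarrow> real"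
  assumes "continuous_on S h" "p \<in> S" "c < h p"
  obtains d where "d > 0" "\<And>y. y \<in> S \<Longrightarrow> dist y p < d \<Longrightarrow> c < h y"
  using continuous_on_less_near[of S "\<lambda>y. - h y" p "- c"] assms
  by (auto intro: continuous_intros)

locale cooperative_system =
  fixes f :: "real \<times> real \<Rightarrow> real \<times> real" and B1 B2 :: real
  assumes continuous: "continuous_on (Omega B1 B2) f"
    and cooperative_fst: "\<And>p q. p \<in> Omega B1 B2 \<Longrightarrow> q \<in> Omega B1 B2 \<Longrightarrow> p \<le> q \<Longrightarrow> fst p = fst q
                            \<Longrightarrow> fst (f p) \<le> fst (f q)"
    and cooperative_snd: "\<And>p q. p \<in> Omega B1 B2 \<Longrightarrow> q \<in> Omega B1 B2 \<Longrightarrow> p \<le> q \<Longrightarrow> snd p = snd q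
                            \<Longrightarrow> snd (f p) \<le> snd (f q)"
begin

lemma field_near_on_small_box:
  assumes p: "p \<in> Omega B1 B2" and "e > 0"
  obtains \<delta> where "\<delta> > 0" "\<And>y. y \<in> Omega B1 B2 \<Longrightarrow> \<bar>fst y - fst p\<bar> \<le> \<delta> \<Longrightarrow> \<bar>snd y - snd p\<bar> \<le> \<delta>
    \<Longrightarrow> \<bar>fst (f y) - fst (f p)\<bar> < e \<and> \<bar>snd (f y) - snd (f p)\<bar> < e"
proof -
  obtain d where "d > 0" and d: "\<And>y. y \<in> Omega B1 B2 \<Longrightarrow> dist y p < d \<Longrightarrow> dist (f y) (f p) < e"
    using continuous p \<open>e > 0\<close> unfolding continuous_on_iff by metis
  show thesis
  proof (rule that[of "d / 3"])
    fix y assume y: "y \<in> Omega B1 B2" "\<bar>fst y - fst p\<bar> \<le> d / 3" "\<bar>snd y - snd p\<bar> \<le> d / 3"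
    have "dist y p \<le> \<bar>fst y - fst p\<bar> + \<bar>snd y - snd p\<bar>" by (rule dist_le_abs_fst_plus_abs_snd)
    also have "\<dots> < d" using y \<open>d > 0\<close> by linarith
    finally have "dist (f y) (f p) < e" using d y(1) by blast
    then show "\<bar>fst (f y) - fst (f p)\<bar> < e \<and> \<bar>snd (f y) - snd (f p)\<bar> < e"
      using dist_fst_le[of "f y" "f p"] dist_snd_le[of "f y" "f p"] by (auto simp: dist_real_def)
  qed (use \<open>d > 0\<close> in simp)
qed

lemma field_semicontinuous:
  assumes p: "p \<in> Omega B1 B2" and "e > 0"
  obtains \<delta> where "\<delta> > 0"
    and "\<And>y. y \<in> Omega B1 B2 \<Longrightarrow> y \<le> p + (\<delta>, \<delta>) \<Longrightarrow> fst p - \<delta> \<le> fst y \<Longrightarrow> fst (f y) < fst (f p) + e"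
    and "\<And>y. y \<in> Omega B1 B2 \<Longrightarrow> y \<le> p + (\<delta>, \<delta>) \<Longrightarrow> snd p - \<delta> \<le> snd y \<Longrightarrow> snd (f y) < snd (f p) + e"
    and "\<And>y. y \<in> Omega B1 B2 \<Longrightarrow> p - (\<delta>, \<delta>) \<le> y \<Longrightarrow> fst y \<le> fst p + \<delta> \<Longrightarrow> fst (f p) - e < fst (f y)"
    and "\<And>y. y \<in> Omega B1 B2 \<Longrightarrow> p - (\<delta>, \<delta>) \<le> y \<Longrightarrow> snd y \<le> snd p + \<delta> \<Longrightarrow> snd (f p) - e < snd (f y)"
proof -
  obtain \<delta> where "\<delta> > 0" and \<delta>: "\<And>y. y \<in> Omega B1 B2 \<Longrightarrow> \<bar>fst y - fst p\<bar> \<le> \<delta> \<Longrightarrow> \<bar>snd y - snd p\<bar> \<le> \<delta>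
    \<Longrightarrow> \<bar>fst (f y) - fst (f p)\<bar> < e \<and> \<bar>snd (f y) - snd (f p)\<bar> < e"
    using field_near_on_small_box[OF p \<open>e > 0\<close>] by blast
  define clamp where "clamp y = (max (fst p - \<delta>) (min (fst y) (fst p + \<delta>)),
                                 max (snd p - \<delta>) (min (snd y) (snd p + \<delta>)))" for y
  have clamp: "clamp y \<in> Omega B1 B2" "\<bar>fst (f (clamp y)) - fst (f p)\<bar> < e"
    "\<bar>snd (f (clamp y)) - snd (f p)\<bar> < e" if "y \<in> Omega B1 B2" for y
  proof -
    show "clamp y \<in> Omega B1 B2" using that p \<open>\<delta> > 0\<close> by (auto simp: clamp_def mem_Omega_iff)
    moreover have "\<bar>fst (clamp y) - fst p\<bar> \<le> \<delta>" "\<bar>snd (clamp y) - snd p\<bar> \<le> \<delta>"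
      using \<open>\<delta> > 0\<close> by (auto simp: clamp_def)
    ultimately show "\<bar>fst (f (clamp y)) - fst (f p)\<bar> < e" "\<bar>snd (f (clamp y)) - snd (f p)\<bar> < e"
      using \<delta> by blast+
  qed
  show thesis
  proof (rule that[OF \<open>\<delta> > 0\<close>])
    fix y assume y: "y \<in> Omega B1 B2"
    note near = clamp(2,3)[OF y, unfolded abs_less_iff]
    show "fst (f y) < fst (f p) + e" if "y \<le> p + (\<delta>, \<delta>)" "fst p - \<delta> \<le> fst y"
    proof -
      have "y \<le> clamp y" "fst y = fst (clamp y)" using that by (auto simp: clamp_def less_eq_prod_def)
      with cooperative_fst[OF y clamp(1)[OF y]] near show ?thesis by linarith
    qed
    show "snd (f y) < snd (f p) + e" if "y \<le> p + (\<delta>, \<delta>)" "snd p - \<delta> \<le> snd y"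
    proof -
      have "y \<le> clamp y" "snd y = snd (clamp y)" using that by (auto simp: clamp_def less_eq_prod_def)
      with cooperative_snd[OF y clamp(1)[OF y]] near show ?thesis by linarith
    qed
    show "fst (f p) - e < fst (f y)" if "p - (\<delta>, \<delta>) \<le> y" "fst y \<le> fst p + \<delta>"
    proof -
      have "clamp y \<le> y" "fst (clamp y) = fst y" using that by (auto simp: clamp_def less_eq_prod_def)
      with cooperative_fst[OF clamp(1)[OF y] y] near show ?thesis by linarith
    qed
    show "snd (f p) - e < snd (f y)" if "p - (\<delta>, \<delta>) \<le> y" "snd y \<le> snd p + \<delta>"
    proof -
      have "clamp y \<le> y" "snd (clamp y) = snd y" using that by (auto simp: clamp_def less_eq_prod_def)
      with cooperative_snd[OF clamp(1)[OF y] y] near show ?thesis by linarith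
    qed
  qed
qed

lemma continuous_on_fst_field: "continuous_on (Omega B1 B2) (\<lambda>p. fst (f p))"
  and continuous_on_snd_field: "continuous_on (Omega B1 B2) (\<lambda>p. snd (f p))"
  using continuous by (auto intro: continuous_intros)

lemma continuous_on_snd_field_vertical:
  assumes "t \<in> {0..B1}" "{y..y'} \<subseteq> {0..B2}"
  shows "continuous_on {y..y'} (\<lambda>s. snd (f (t, s)))"
proof (rule continuous_on_compose2[OF continuous_on_snd_field])
  show "continuous_on {y..y'} (Pair t)" by (intro continuous_intros)
  show "Pair t ` {y..y'} \<subseteq> Omega B1 B2" using assms by (auto simp: mem_Omega_iff)
qed

lemma order_interval_forward_invariant:
  assumes sol: "is_solution f (Omega B1 B2) x" and "x 0 \<in> {a..b}" "0 \<le> t"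
    and a: "a \<in> Omega B1 B2" and b: "b \<in> Omega B1 B2" "fst (f b) < 0" "snd (f b) < 0"
    and a_sub: "0 < fst a \<Longrightarrow> 0 < fst (f a)" "0 < snd a \<Longrightarrow> 0 < snd (f a)"
  shows "x t \<in> {a..b}"
proof (rule box_forward_invariant[OF sol \<open>x 0 \<in> {a..b}\<close> _ _ _ _ \<open>0 \<le> t\<close>])
  fix p assume p: "p \<in> Omega B1 B2" "p \<in> {a..b}"
  show "fst (f p) < 0" if "fst p = fst b" using cooperative_fst[OF p(1) b(1)] p(2) that b(2) by simp
  show "snd (f p) < 0" if "snd p = snd b" using cooperative_snd[OF p(1) b(1)] p(2) that b(3) by simp
  show "0 < fst (f p)" if "fst p = fst a" "0 < fst a"
    using cooperative_fst[OF a p(1)] p(2) that a_sub(1) by simp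
  show "0 < snd (f p)" if "snd p = snd a" "0 < snd a"
    using cooperative_snd[OF a p(1)] p(2) that a_sub(2) by simp
qed

lemma solution_bounds:
  assumes "is_solution f (Omega B1 B2) x"
  shows "(\<lambda>t. fst (x t)) ` {0..} \<subseteq> {0..B1}" "(\<lambda>t. snd (x t)) ` {0..} \<subseteq> {0..B2}"
  using is_solution_components(1)[OF assms] unfolding image_subset_iff mem_Omega_iff by simp_all

lemma field_nonneg_at_upper_limits:
  assumes sol: "is_solution f (Omega B1 B2) x"
  defines "L \<equiv> (upper_limit (\<lambda>t. fst (x t)), upper_limit (\<lambda>t. snd (x t)))"
  shows "0 \<le> f L"
proof -
  note bounds = solution_bounds[OF sol]
  note deriv = is_solution_components(2,3)[OF sol]
  have L: "L \<in> Omega B1 B2" using upper_limit_bounds[OF bounds(1)] upper_limit_bounds[OF bounds(2)]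
    by (simp add: L_def mem_Omega_iff)
  have below: "\<forall>\<^sub>F t in at_top. 0 \<le> t \<and> x t \<le> L + (\<delta>, \<delta>)" if "\<delta> > 0" for \<delta>
    using eventually_ge_at_top[of 0] eventually_le_upper_limit[OF bounds(1) that]
      eventually_le_upper_limit[OF bounds(2) that]
    by eventually_elim (simp add: L_def less_eq_prod_def)
  have "0 \<le> fst (f L)"
  proof (rule nonneg_if_deriv_bounded_near_upper_limit[OF deriv(1) bounds(1)])
    fix e :: real assume "e > 0"
    obtain \<delta> where \<delta>: "\<delta> > 0" and near: "\<And>y. y \<in> Omega B1 B2 \<Longrightarrow> y \<le> L + (\<delta>, \<delta>)
        \<Longrightarrow> fst L - \<delta> \<le> fst y \<Longrightarrow> fst (f y) < fst (f L) + e"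
      by (rule field_semicontinuous[OF L \<open>e > 0\<close>], erule that)
    have "\<forall>\<^sub>F t in at_top. fst L - \<delta> \<le> fst (x t) \<longrightarrow> fst (f (x t)) < fst (f L) + e"
      using below[OF \<delta>] by eventually_elim (use near is_solution_components(1)[OF sol] in blast)
    then show "\<exists>\<delta>>0. \<forall>\<^sub>F t in at_top. upper_limit (\<lambda>t. fst (x t)) - \<delta> \<le> fst (x t)
        \<longrightarrow> fst (f (x t)) < fst (f L) + e" using \<delta> by (auto simp: L_def)
  qed
  moreover have "0 \<le> snd (f L)"
  proof (rule nonneg_if_deriv_bounded_near_upper_limit[OF deriv(2) bounds(2)])
    fix e :: real assume "e > 0"
    obtain \<delta> where \<delta>: "\<delta> > 0" and near: "\<And>y. y \<in> Omega B1 B2 \<Longrightarrow> y \<le> L + (\<delta>, \<delta>)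
        \<Longrightarrow> snd L - \<delta> \<le> snd y \<Longrightarrow> snd (f y) < snd (f L) + e"
      by (rule field_semicontinuous[OF L \<open>e > 0\<close>], erule that)
    have "\<forall>\<^sub>F t in at_top. snd L - \<delta> \<le> snd (x t) \<longrightarrow> snd (f (x t)) < snd (f L) + e"
      using below[OF \<delta>] by eventually_elim (use near is_solution_components(1)[OF sol] in blast)
    then show "\<exists>\<delta>>0. \<forall>\<^sub>F t in at_top. upper_limit (\<lambda>t. snd (x t)) - \<delta> \<le> snd (x t)
        \<longrightarrow> snd (f (x t)) < snd (f L) + e" using \<delta> by (auto simp: L_def)
  qed
  ultimately show ?thesis by (simp add: less_eq_prod_def)
qed

lemma field_nonpos_at_lower_limits:
  assumes sol: "is_solution f (Omega B1 B2) x"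
  defines "l \<equiv> (lower_limit (\<lambda>t. fst (x t)), lower_limit (\<lambda>t. snd (x t)))"
  shows "f l \<le> 0"
proof -
  note bounds = solution_bounds[OF sol]
  note deriv = is_solution_components(2,3)[OF sol]
  have l: "l \<in> Omega B1 B2" using lower_limit_bounds[OF bounds(1)] lower_limit_bounds[OF bounds(2)]
    by (simp add: l_def mem_Omega_iff)
  have above: "\<forall>\<^sub>F t in at_top. 0 \<le> t \<and> l - (\<delta>, \<delta>) \<le> x t" if "\<delta> > 0" for \<delta>
    using eventually_ge_at_top[of 0] eventually_lower_limit_le[OF bounds(1) that]
      eventually_lower_limit_le[OF bounds(2) that]
    by eventually_elim (simp add: l_def less_eq_prod_def)
  have "fst (f l) \<le> 0"
  proof (rule nonpos_if_deriv_bounded_near_lower_limit[OF deriv(1) bounds(1)])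
    fix e :: real assume "e > 0"
    obtain \<delta> where \<delta>: "\<delta> > 0" and near: "\<And>y. y \<in> Omega B1 B2 \<Longrightarrow> l - (\<delta>, \<delta>) \<le> y
        \<Longrightarrow> fst y \<le> fst l + \<delta> \<Longrightarrow> fst (f l) - e < fst (f y)"
      by (rule field_semicontinuous[OF l \<open>e > 0\<close>], erule that)
    have "\<forall>\<^sub>F t in at_top. fst (x t) \<le> fst l + \<delta> \<longrightarrow> fst (f l) - e < fst (f (x t))"
      using above[OF \<delta>] by eventually_elim (use near is_solution_components(1)[OF sol] in blast)
    then show "\<exists>\<delta>>0. \<forall>\<^sub>F t in at_top. fst (x t) \<le> lower_limit (\<lambda>t. fst (x t)) + \<delta>
        \<longrightarrow> fst (f l) - e < fst (f (x t))" using \<delta> by (auto simp: l_def)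
  qed
  moreover have "snd (f l) \<le> 0"
  proof (rule nonpos_if_deriv_bounded_near_lower_limit[OF deriv(2) bounds(2)])
    fix e :: real assume "e > 0"
    obtain \<delta> where \<delta>: "\<delta> > 0" and near: "\<And>y. y \<in> Omega B1 B2 \<Longrightarrow> l - (\<delta>, \<delta>) \<le> y
        \<Longrightarrow> snd y \<le> snd l + \<delta> \<Longrightarrow> snd (f l) - e < snd (f y)"
      by (rule field_semicontinuous[OF l \<open>e > 0\<close>], erule that)
    have "\<forall>\<^sub>F t in at_top. snd (x t) \<le> snd l + \<delta> \<longrightarrow> snd (f l) - e < snd (f (x t))"
      using above[OF \<delta>] by eventually_elim (use near is_solution_components(1)[OF sol] in blast)
    then show "\<exists>\<delta>>0. \<forall>\<^sub>F t in at_top. snd (x t) \<le> lower_limit (\<lambda>t. snd (x t)) + \<delta>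
        \<longrightarrow> snd (f l) - e < snd (f (x t))" using \<delta> by (auto simp: l_def)
  qed
  ultimately show ?thesis by (simp add: less_eq_prod_def)
qed

end

locale cooperative_system_with_equilibrium = cooperative_system +
  fixes xb :: "real \<times> real"
  assumes xb_in: "xb \<in> Omega B1 B2" and xb_less: "fst xb < B1" "snd xb < B2"
    and equilibrium: "f xb = 0"
    and comparison: "\<And>p q. p \<in> Omega B1 B2 \<Longrightarrow> q \<in> Omega B1 B2 \<Longrightarrow> 0 \<le> f p \<Longrightarrow> f q \<le> 0 \<Longrightarrow> p \<le> q"
    and snd_strict: "\<And>p q. p \<in> Omega B1 B2 \<Longrightarrow> q \<in> Omega B1 B2 \<Longrightarrow> fst p = fst q \<Longrightarrow> snd p < snd q
                       \<Longrightarrow> snd (f q) < snd (f p) \<or> snd (f q) < 0"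
begin

lemma equilibrium_unique: "y \<in> Omega B1 B2 \<Longrightarrow> f y = 0 \<Longrightarrow> y = xb"
  using comparison[of y xb] comparison[of xb y] xb_in equilibrium by (simp add: order.antisym)

lemma solution_tendsto_equilibrium:
  assumes sol: "is_solution f (Omega B1 B2) x"
  shows "(x \<longlongrightarrow> xb) at_top"
proof -
  note bounds = solution_bounds[OF sol]
  define L where "L = (upper_limit (\<lambda>t. fst (x t)), upper_limit (\<lambda>t. snd (x t)))"
  define l where "l = (lower_limit (\<lambda>t. fst (x t)), lower_limit (\<lambda>t. snd (x t)))"
  have "L \<in> Omega B1 B2" "l \<in> Omega B1 B2"
    using upper_limit_bounds[OF bounds(1)] upper_limit_bounds[OF bounds(2)]
      lower_limit_bounds[OF bounds(1)] lower_limit_bounds[OF bounds(2)]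
    by (simp_all add: L_def l_def mem_Omega_iff)
  then have "L \<le> xb" "xb \<le> l"
    using comparison field_nonneg_at_upper_limits[OF sol] field_nonpos_at_lower_limits[OF sol]
      xb_in equilibrium by (simp_all add: L_def l_def)
  then have "((\<lambda>t. fst (x t)) \<longlongrightarrow> fst xb) at_top" "((\<lambda>t. snd (x t)) \<longlongrightarrow> snd xb) at_top"
    by (auto intro: tendsto_if_upper_limit_le_lower_limit[OF bounds(1)]
        tendsto_if_upper_limit_le_lower_limit[OF bounds(2)] simp: L_def l_def less_eq_prod_def)
  from tendsto_Pair[OF this] show ?thesis by simp
qed

lemma snd_nullcline_point_above:
  assumes "e > 0"
  obtains t y where "fst xb < t" "t \<le> fst xb + e / 2" "t < B1" "snd xb \<le> y" "y \<le> snd xb + e / 2" "y < B2"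
    "snd (f (t, y)) = 0" "fst (f (t, y)) < 0"
proof -
  obtain x1 x2 where xb: "xb = (x1, x2)" by fastforce
  have x: "0 \<le> x1" "x1 < B1" "0 \<le> x2" "x2 < B2" using xb_in xb_less by (auto simp: xb mem_Omega_iff)
  define Y where "Y = x2 + min e (B2 - x2) / 2"
  have Y: "x2 < Y" "Y < B2" "Y \<le> x2 + e / 2" using x \<open>e > 0\<close> by (auto simp: Y_def min_def field_simps)
  have "snd (f (x1, Y)) < 0"
    using snd_strict[OF xb_in, of "(x1, Y)"] x Y equilibrium by (auto simp: xb mem_Omega_iff)
  then obtain d where "d > 0"
    and d: "\<And>y. y \<in> Omega B1 B2 \<Longrightarrow> dist y (x1, Y) < d \<Longrightarrow> snd (f y) < 0"
    using continuous_on_less_near[OF continuous_on_snd_field, of "(x1, Y)"] x Y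
    by (auto simp: mem_Omega_iff)
  define t where "t = x1 + min d (min e (B1 - x1)) / 2"
  have t: "x1 < t" "t < B1" "t \<le> x1 + e / 2" "t - x1 < d"
    using x \<open>e > 0\<close> \<open>d > 0\<close> by (auto simp: t_def min_def field_simps)
  have "snd (f (t, Y)) < 0" using d[of "(t, Y)"] t x Y by (auto simp: mem_Omega_iff dist_Pair_Pair dist_real_def)
  moreover have "0 \<le> snd (f (t, x2))"
    using cooperative_snd[OF xb_in, of "(t, x2)"] t x equilibrium by (auto simp: xb mem_Omega_iff)
  ultimately obtain y where y: "x2 \<le> y" "y \<le> Y" "snd (f (t, y)) = 0"
    using IVT2'[of "\<lambda>s. snd (f (t, s))" Y 0 x2] continuous_on_snd_field_vertical[of t x2 Y] t x Y
    by fastforce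
  have "(t, y) \<in> Omega B1 B2" using t x y Y by (auto simp: mem_Omega_iff)
  have "fst (f (t, y)) < 0"
  proof (rule ccontr)
    assume "\<not> fst (f (t, y)) < 0"
    then have "(t, y) \<le> xb"
      using comparison[OF \<open>(t, y) \<in> Omega B1 B2\<close> xb_in] y(3) equilibrium by (simp add: less_eq_prod_def)
    then show False using t by (simp add: xb)
  qed
  then show thesis using that t y Y by (simp add: xb)
qed

lemma snd_nullcline_point_below:
  assumes "e > 0" "0 < fst xb" "0 < snd xb"
  obtains t y where "0 < t" "t < fst xb" "fst xb \<le> t + e / 2" "0 \<le> y" "y \<le> snd xb" "snd xb \<le> y + e / 2"
    "snd (f (t, y)) = 0" "0 < fst (f (t, y))"
proof -
  obtain x1 x2 where xb: "xb = (x1, x2)" by fastforce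
  have x: "0 < x1" "x1 < B1" "0 < x2" "x2 < B2" using assms xb_in xb_less by (auto simp: xb mem_Omega_iff)
  define Y where "Y = x2 - min e x2 / 2"
  have Y: "0 < Y" "Y < x2" "x2 \<le> Y + e / 2" using x \<open>e > 0\<close> by (auto simp: Y_def min_def field_simps)
  have "0 < snd (f (x1, Y))"
    using snd_strict[OF _ xb_in, of "(x1, Y)"] x Y equilibrium by (auto simp: xb mem_Omega_iff)
  then obtain d where "d > 0"
    and d: "\<And>y. y \<in> Omega B1 B2 \<Longrightarrow> dist y (x1, Y) < d \<Longrightarrow> 0 < snd (f y)"
    using continuous_on_greater_near[OF continuous_on_snd_field, of "(x1, Y)"] x Y
    by (auto simp: mem_Omega_iff)
  define t where "t = x1 - min d (min e x1) / 2"
  have t: "0 < t" "t < x1" "x1 \<le> t + e / 2" "x1 - t < d"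
    using x \<open>e > 0\<close> \<open>d > 0\<close> by (auto simp: t_def min_def field_simps)
  have "0 < snd (f (t, Y))" using d[of "(t, Y)"] t x Y by (auto simp: mem_Omega_iff dist_Pair_Pair dist_real_def)
  moreover have "snd (f (t, x2)) \<le> 0"
    using cooperative_snd[OF _ xb_in, of "(t, x2)"] t x equilibrium by (auto simp: xb mem_Omega_iff)
  ultimately obtain y where y: "Y \<le> y" "y \<le> x2" "snd (f (t, y)) = 0"
    using IVT2'[of "\<lambda>s. snd (f (t, s))" x2 0 Y] continuous_on_snd_field_vertical[of t Y x2] t x Y
    by fastforce
  have "(t, y) \<in> Omega B1 B2" using t x y Y by (auto simp: mem_Omega_iff)
  have "0 < fst (f (t, y))"
  proof (rule ccontr)
    assume "\<not> 0 < fst (f (t, y))"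
    then have "xb \<le> (t, y)"
      using comparison[OF xb_in \<open>(t, y) \<in> Omega B1 B2\<close>] y(3) equilibrium by (simp add: less_eq_prod_def)
    then show False using t by (simp add: xb)
  qed
  then show thesis using t y Y by (intro that) (auto simp: xb)
qed

lemma upper_corner:
  assumes "e > 0"
  obtains b where "b \<in> Omega B1 B2" "fst xb < fst b" "snd xb < snd b" "b \<le> xb + (e, e)"
    "fst (f b) < 0" "snd (f b) < 0"
proof -
  \<comment> \<open>\<open>b\<close> lies just above a point of the nullcline of \<open>snd \<circ> f\<close> where \<open>fst \<circ> f < 0\<close>\<close>
  obtain t y where t: "fst xb < t" "t \<le> fst xb + e / 2" "t < B1"
    and y: "snd xb \<le> y" "y \<le> snd xb + e / 2" "y < B2" "snd (f (t, y)) = 0" "fst (f (t, y)) < 0"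
    using snd_nullcline_point_above[OF \<open>e > 0\<close>] by blast
  have p: "(t, y) \<in> Omega B1 B2" using xb_in t y by (auto simp: mem_Omega_iff)
  obtain d where "d > 0" and d: "\<And>q. q \<in> Omega B1 B2 \<Longrightarrow> dist q (t, y) < d \<Longrightarrow> fst (f q) < 0"
    using continuous_on_less_near[OF continuous_on_fst_field p y(5)] by blast
  define \<eta> where "\<eta> = min d (min e (B2 - y)) / 2"
  have \<eta>: "0 < \<eta>" "\<eta> < d" "\<eta> \<le> e / 2" "y + \<eta> < B2"
    using \<open>d > 0\<close> \<open>e > 0\<close> y by (auto simp: \<eta>_def min_def field_simps)
  define b where "b = (t, y + \<eta>)"
  have b: "b \<in> Omega B1 B2" "dist b (t, y) < d" "fst xb < fst b" "snd xb < snd b" "b \<le> xb + (e, e)"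
    using p t y \<eta> by (auto simp: b_def mem_Omega_iff dist_Pair_Pair dist_real_def less_eq_prod_def)
  have "snd (f b) < 0" using snd_strict[OF p b(1)] y(4) \<eta> by (auto simp: b_def)
  then show thesis using that b d by blast
qed

lemma lower_corner:
  assumes "e > 0"
  obtains a where "a \<in> Omega B1 B2" "a \<le> xb" "xb \<le> a + (e, e)"
    "fst a < fst xb \<or> fst a = 0" "snd a < snd xb \<or> snd a = 0"
    "0 < fst a \<Longrightarrow> 0 < fst (f a)" "0 < snd a \<Longrightarrow> 0 < snd (f a)"
proof -
  obtain x1 x2 where xb: "xb = (x1, x2)" by fastforce
  have x: "0 \<le> x1" "x1 < B1" "0 \<le> x2" "x2 < B2" using xb_in xb_less by (auto simp: xb mem_Omega_iff)
  consider "x1 = 0" | "0 < x1" "x2 = 0" | "0 < x1" "0 < x2" using x by linarith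
  then show thesis
  proof cases
    case 1
    define a where "a = (0::real, max (x2 - e) 0)"
    have a: "a \<in> Omega B1 B2" "a \<le> xb" using x \<open>e > 0\<close> by (auto simp: a_def xb mem_Omega_iff)
    have "0 < snd (f a)" if "0 < snd a"
      using snd_strict[OF a(1) xb_in] that 1 \<open>e > 0\<close> equilibrium by (auto simp: a_def xb)
    then show thesis using a 1 x \<open>e > 0\<close> by (intro that) (auto simp: a_def xb)
  next
    case 2
    define a where "a = (x1 - min e x1 / 2, 0::real)"
    have a: "a \<in> Omega B1 B2" "a \<le> xb" "xb \<le> a + (e, e)" "fst a < x1"
      using x 2 \<open>e > 0\<close> by (auto simp: a_def xb mem_Omega_iff min_def field_simps)
    have "snd (f a) \<le> 0"
      using cooperative_snd[OF a(1) xb_in a(2)] equilibrium by (simp add: a_def xb 2)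
    moreover have "0 < fst (f a)"
    proof (rule ccontr)
      assume "\<not> 0 < fst (f a)"
      with \<open>snd (f a) \<le> 0\<close> have "xb \<le> a"
        using comparison[OF xb_in a(1)] equilibrium by (simp add: less_eq_prod_def)
      then show False using a(4) by (simp add: xb less_eq_prod_def)
    qed
    ultimately show thesis using a by (intro that) (auto simp: a_def xb)
  next
    case 3
    \<comment> \<open>\<open>a\<close> lies just below a point of the nullcline of \<open>snd \<circ> f\<close> where \<open>fst \<circ> f > 0\<close>\<close>
    obtain t y where t: "0 < t" "t < x1" "x1 \<le> t + e / 2"
      and y: "0 \<le> y" "y \<le> x2" "x2 \<le> y + e / 2" "snd (f (t, y)) = 0" "0 < fst (f (t, y))"
      using snd_nullcline_point_below[OF \<open>e > 0\<close>] 3 by (auto simp: xb)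
    have p: "(t, y) \<in> Omega B1 B2" using x t y by (auto simp: mem_Omega_iff)
    obtain d where "d > 0" and d: "\<And>q. q \<in> Omega B1 B2 \<Longrightarrow> dist q (t, y) < d \<Longrightarrow> 0 < fst (f q)"
      using continuous_on_greater_near[OF continuous_on_fst_field p y(5)] by blast
    define \<eta> where "\<eta> = min d e / 2"
    have \<eta>: "0 < \<eta>" "\<eta> < d" "\<eta> \<le> e / 2" using \<open>d > 0\<close> \<open>e > 0\<close> by (auto simp: \<eta>_def min_def)
    define a where "a = (t, max (y - \<eta>) 0)"
    have a: "a \<in> Omega B1 B2" "a \<le> xb" "xb \<le> a + (e, e)" "dist a (t, y) < d"
      "snd a < snd xb \<or> snd a = 0"
      using x t y \<eta> by (auto simp: a_def xb mem_Omega_iff dist_Pair_Pair dist_real_def)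
    have "0 < snd (f a)" if "0 < snd a"
      using snd_strict[OF a(1) p] y(4) that \<eta> by (auto simp: a_def)
    then show thesis using a t d by (intro that) (auto simp: a_def xb)
  qed
qed

lemma equilibrium_stable:
  assumes "\<epsilon> > 0"
  shows "\<exists>\<delta>>0. \<forall>x. is_solution f (Omega B1 B2) x \<and> dist (x 0) xb < \<delta> \<longrightarrow> (\<forall>t\<ge>0. dist (x t) xb < \<epsilon>)"
proof -
  define e where "e = \<epsilon> / 3"
  have "e > 0" using assms by (simp add: e_def)
  obtain b where b: "b \<in> Omega B1 B2" "fst xb < fst b" "snd xb < snd b" "b \<le> xb + (e, e)"
    "fst (f b) < 0" "snd (f b) < 0"
    using upper_corner[OF \<open>e > 0\<close>] by blast
  obtain a where a: "a \<in> Omega B1 B2" "a \<le> xb" "xb \<le> a + (e, e)"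
    "fst a < fst xb \<or> fst a = 0" "snd a < snd xb \<or> snd a = 0"
    "0 < fst a \<Longrightarrow> 0 < fst (f a)" "0 < snd a \<Longrightarrow> 0 < snd (f a)"
    using lower_corner[OF \<open>e > 0\<close>] by blast
  \<comment> \<open>a lower face lying on the boundary of \<open>Omega B1 B2\<close> imposes no constraint on \<open>\<delta>\<close>\<close>
  define \<delta> where "\<delta> = min (min (fst b - fst xb) (snd b - snd xb))
    (min (if fst a < fst xb then fst xb - fst a else 1) (if snd a < snd xb then snd xb - snd a else 1))"
  have \<delta>: "0 < \<delta>" "\<delta> \<le> fst b - fst xb" "\<delta> \<le> snd b - snd xb"
    "fst a < fst xb \<Longrightarrow> \<delta> \<le> fst xb - fst a" "snd a < snd xb \<Longrightarrow> \<delta> \<le> snd xb - snd a"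
    using b by (auto simp: \<delta>_def)
  have box: "x t \<in> {a..b}" if sol: "is_solution f (Omega B1 B2) x" and x0: "dist (x 0) xb < \<delta>"
    and "0 \<le> t" for x t
  proof (rule order_interval_forward_invariant[OF sol _ \<open>0 \<le> t\<close> a(1) b(1) b(5,6) a(6,7)])
    have "\<bar>fst (x 0) - fst xb\<bar> < \<delta>" "\<bar>snd (x 0) - snd xb\<bar> < \<delta>"
      using dist_fst_le[of "x 0" xb] dist_snd_le[of "x 0" xb] x0 by (auto simp: dist_real_def)
    then show "x 0 \<in> {a..b}"
      using \<delta> a(4,5) is_solution_components(1)[OF sol, of 0] by (auto simp: less_eq_prod_def mem_Omega_iff)
  qed
  have "dist (x t) xb < \<epsilon>" if "is_solution f (Omega B1 B2) x" "dist (x 0) xb < \<delta>" "0 \<le> t" for x t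
  proof -
    have "dist (x t) xb \<le> \<bar>fst (x t) - fst xb\<bar> + \<bar>snd (x t) - snd xb\<bar>"
      by (rule dist_le_abs_fst_plus_abs_snd)
    also have "\<dots> \<le> e + e" using box[OF that] a(2,3) b(4) by (auto simp: less_eq_prod_def)
    also have "\<dots> < \<epsilon>" using assms by (simp add: e_def)
    finally show ?thesis .
  qed
  then show ?thesis using \<open>0 < \<delta>\<close> by blast
qed

end

section \<open>The two-route model\<close>

lemma supply_fun_eq_min:
  assumes "0 < C" "C < B" "0 < F"
  shows "supply_fun F B C y = min F (F / (B - C) * (B - y))"
proof (cases "y < C")
  case True
  have "F / (B - C) * (B - C) \<le> F / (B - C) * (B - y)" using assms True by (intro mult_left_mono) auto
  then show ?thesis using assms True by (simp add: supply_fun_def)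
next
  case False
  have "F / (B - C) * (B - y) \<le> F / (B - C) * (B - C)" using assms False by (intro mult_left_mono) auto
  then show ?thesis using assms False by (simp add: supply_fun_def min_def)
qed

lemma demand_fun_eq_min:
  assumes "0 < C" "0 < F"
  shows "demand_fun F C y = min (F / C * y) F"
proof (cases "y < C")
  case True
  have "F / C * y \<le> F / C * C" using assms True by (intro mult_left_mono) auto
  then show ?thesis using assms True by (simp add: demand_fun_def min_def)
next
  case False
  have "F / C * C \<le> F / C * y" using assms False by (intro mult_left_mono) auto
  then show ?thesis using assms False by (simp add: demand_fun_def min_def)
qed

locale two_route_model =
  fixes \<phi> B1 C1 F1 B2 C2 F2 :: real and R1 R2 :: "real \<times> real \<Rightarrow> real"
  assumes pos: "0 < \<phi>" "0 < C1" "C1 < B1" "0 < F1" "0 < C2" "C2 < B2" "0 < F2"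
    and R_nonneg: "\<And>p. p \<in> Omega B1 B2 \<Longrightarrow> 0 \<le> R1 p" "\<And>p. p \<in> Omega B1 B2 \<Longrightarrow> 0 \<le> R2 p"
    and R_sum: "\<And>p. p \<in> Omega B1 B2 \<Longrightarrow> R1 p + R2 p = 1"
    and R_continuous: "continuous_on (Omega B1 B2) R1" "continuous_on (Omega B1 B2) R2"
    and R1_mono: "\<And>p q. p \<in> Omega B1 B2 \<Longrightarrow> q \<in> Omega B1 B2 \<Longrightarrow> p \<le> q \<Longrightarrow> fst p = fst q \<Longrightarrow> R1 p \<le> R1 q"
    and R2_mono: "\<And>p q. p \<in> Omega B1 B2 \<Longrightarrow> q \<in> Omega B1 B2 \<Longrightarrow> p \<le> q \<Longrightarrow> snd p = snd q \<Longrightarrow> R2 p \<le> R2 q"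
begin

abbreviation "field \<equiv> two_route_field \<phi> B1 C1 F1 B2 C2 F2 R1 R2"

lemma R1_antimono: "p \<in> Omega B1 B2 \<Longrightarrow> q \<in> Omega B1 B2 \<Longrightarrow> p \<le> q \<Longrightarrow> snd p = snd q \<Longrightarrow> R1 q \<le> R1 p"
  using R2_mono[of p q] R_sum[of p] R_sum[of q] by linarith

lemma R2_antimono: "p \<in> Omega B1 B2 \<Longrightarrow> q \<in> Omega B1 B2 \<Longrightarrow> p \<le> q \<Longrightarrow> fst p = fst q \<Longrightarrow> R2 q \<le> R2 p"
  using R1_mono[of p q] R_sum[of p] R_sum[of q] by linarith

lemma fst_field_free_flow: "fst p \<le> C1 \<Longrightarrow> fst (field p) = min (\<phi> * R1 p) F1 - F1 / C1 * fst p"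
  using pos by (cases "fst p < C1") (auto simp: two_route_field_def supply_fun_def demand_fun_def)

lemma snd_field_free_flow: "snd p \<le> C2 \<Longrightarrow> snd (field p) = min (\<phi> * R2 p) F2 - F2 / C2 * snd p"
  using pos by (cases "snd p < C2") (auto simp: two_route_field_def supply_fun_def demand_fun_def)

lemma fst_field_congested: "C1 < fst p \<Longrightarrow> fst (field p) < 0"
proof -
  assume "C1 < fst p"
  then have "F1 / (B1 - C1) * (B1 - fst p) < F1" using pos by (simp add: field_simps)
  then show ?thesis using \<open>C1 < fst p\<close> by (simp add: two_route_field_def supply_fun_def demand_fun_def)
qed

lemma snd_field_congested: "C2 < snd p \<Longrightarrow> snd (field p) < 0"
proof -
  assume "C2 < snd p"
  then have "F2 / (B2 - C2) * (B2 - snd p) < F2" using pos by (simp add: field_simps)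
  then show ?thesis using \<open>C2 < snd p\<close> by (simp add: two_route_field_def supply_fun_def demand_fun_def)
qed

lemma field_continuous: "continuous_on (Omega B1 B2) field"
  using pos unfolding two_route_field_def supply_fun_eq_min[OF pos(2,3,4)] supply_fun_eq_min[OF pos(5,6,7)]
    demand_fun_eq_min[OF pos(2,4)] demand_fun_eq_min[OF pos(5,7)]
  by (intro continuous_intros R_continuous)

sublocale cooperative_system field B1 B2
proof
  show "continuous_on (Omega B1 B2) field" by (rule field_continuous)
  fix p q assume pq: "p \<in> Omega B1 B2" "q \<in> Omega B1 B2" "p \<le> q"
  show "fst (field p) \<le> fst (field q)" if "fst p = fst q"
  proof -
    have "\<phi> * R1 p \<le> \<phi> * R1 q" using R1_mono[OF pq that] pos(1) by simp
    then show ?thesis unfolding two_route_field_def fst_conv that by (intro diff_right_mono min.mono) auto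
  qed
  show "snd (field p) \<le> snd (field q)" if "snd p = snd q"
  proof -
    have "\<phi> * R2 p \<le> \<phi> * R2 q" using R2_mono[OF pq that] pos(1) by simp
    then show ?thesis unfolding two_route_field_def snd_conv that by (intro diff_right_mono min.mono) auto
  qed
qed

lemma nonneg_field_free_flow:
  assumes "0 \<le> field p"
  shows "fst p \<le> C1" "snd p \<le> C2"
    "F1 / C1 * fst p \<le> min (\<phi> * R1 p) F1" "F2 / C2 * snd p \<le> min (\<phi> * R2 p) F2"
proof -
  have f: "0 \<le> fst (field p)" "0 \<le> snd (field p)" using assms by (auto simp: less_eq_prod_def)
  then show "fst p \<le> C1" "snd p \<le> C2"
    using fst_field_congested[of p] snd_field_congested[of p] by linarith+
  then show "F1 / C1 * fst p \<le> min (\<phi> * R1 p) F1" "F2 / C2 * snd p \<le> min (\<phi> * R2 p) F2"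
    using f fst_field_free_flow snd_field_free_flow by auto
qed

lemma nonpos_field_outflow:
  assumes "field q \<le> 0"
  shows "fst q \<le> C1 \<Longrightarrow> min (\<phi> * R1 q) F1 \<le> F1 / C1 * fst q"
    and "snd q \<le> C2 \<Longrightarrow> min (\<phi> * R2 q) F2 \<le> F2 / C2 * snd q"
  using assms fst_field_free_flow[of q] snd_field_free_flow[of q] by (auto simp: less_eq_prod_def)

text \<open>If \<open>q < p\<close> in both coordinates, the total outflow at \<open>p\<close> would exceed the demand \<open>\<phi>\<close>.\<close>

lemma field_comparison_not_both_less:
  assumes p: "p \<in> Omega B1 B2" and q: "q \<in> Omega B1 B2" and "0 \<le> field p" "field q \<le> 0"
  shows "\<not> (fst q < fst p \<and> snd q < snd p)"
proof
  assume less: "fst q < fst p \<and> snd q < snd p"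
  note p_free = nonneg_field_free_flow[OF assms(3)]
  have "F1 / C1 * fst q < F1 / C1 * fst p" by (rule mult_strict_left_mono) (use less pos in auto)
  moreover have "F2 / C2 * snd q < F2 / C2 * snd p" by (rule mult_strict_left_mono) (use less pos in auto)
  moreover have "F1 / C1 * fst p \<le> F1" "F2 / C2 * snd p \<le> F2"
    using p_free(1,2) pos by (simp_all add: field_simps)
  moreover have "min (\<phi> * R1 q) F1 \<le> F1 / C1 * fst q" "min (\<phi> * R2 q) F2 \<le> F2 / C2 * snd q"
    using nonpos_field_outflow[OF assms(4)] less p_free(1,2) by simp_all
  ultimately have "\<phi> * R1 q + \<phi> * R2 q < min (\<phi> * R1 p) F1 + min (\<phi> * R2 p) F2"
    using p_free(3,4) by (auto simp: min_def split: if_splits)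
  also have "\<dots> \<le> \<phi> * R1 p + \<phi> * R2 p" by simp
  finally show False using R_sum[OF p] R_sum[OF q] by (simp flip: distrib_left)
qed

lemma field_comparison:
  assumes p: "p \<in> Omega B1 B2" and q: "q \<in> Omega B1 B2" and "0 \<le> field p" "field q \<le> 0"
  shows "p \<le> q"
proof -
  note p_free = nonneg_field_free_flow[OF assms(3)] and q_out = nonpos_field_outflow[OF assms(4)]
  note not_both = field_comparison_not_both_less[OF assms]
  have "fst p \<le> fst q"
  proof (rule ccontr)
    assume "\<not> fst p \<le> fst q"
    then have less: "fst q < fst p" "snd p \<le> snd q" using not_both by auto
    define r where "r = (fst q, snd p)"
    have r: "r \<in> Omega B1 B2" using p q by (auto simp: r_def mem_Omega_iff)
    have "R1 p \<le> R1 r" using R1_antimono[OF r p] less by (auto simp: r_def less_eq_prod_def)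
    also have "R1 r \<le> R1 q" using R1_mono[OF r q] less by (auto simp: r_def less_eq_prod_def)
    finally have "min (\<phi> * R1 p) F1 \<le> min (\<phi> * R1 q) F1" using pos(1) by (intro min.mono) auto
    moreover have "F1 / C1 * fst q < F1 / C1 * fst p" by (rule mult_strict_left_mono) (use less pos in auto)
    ultimately show False using p_free q_out less by linarith
  qed
  moreover have "snd p \<le> snd q"
  proof (rule ccontr)
    assume "\<not> snd p \<le> snd q"
    then have less: "snd q < snd p" "fst p \<le> fst q" using not_both by auto
    define r where "r = (fst p, snd q)"
    have r: "r \<in> Omega B1 B2" using p q by (auto simp: r_def mem_Omega_iff)
    have "R2 p \<le> R2 r" using R2_antimono[OF r p] less by (auto simp: r_def less_eq_prod_def)
    also have "R2 r \<le> R2 q" using R2_mono[OF r q] less by (auto simp: r_def less_eq_prod_def)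
    finally have "min (\<phi> * R2 p) F2 \<le> min (\<phi> * R2 q) F2" using pos(1) by (intro min.mono) auto
    moreover have "F2 / C2 * snd q < F2 / C2 * snd p" by (rule mult_strict_left_mono) (use less pos in auto)
    ultimately show False using p_free q_out less by linarith
  qed
  ultimately show ?thesis by (simp add: less_eq_prod_def)
qed

lemma snd_field_strict:
  assumes p: "p \<in> Omega B1 B2" and q: "q \<in> Omega B1 B2" and "fst p = fst q" "snd p < snd q"
  shows "snd (field q) < snd (field p) \<or> snd (field q) < 0"
proof (cases "C2 < snd q")
  case True
  then show ?thesis using snd_field_congested by blast
next
  case False
  have "R2 q \<le> R2 p" using R2_antimono[OF p q] assms(3,4) by (simp add: less_eq_prod_def)
  then have "min (\<phi> * R2 q) F2 \<le> min (\<phi> * R2 p) F2" using pos(1) by (intro min.mono) auto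
  moreover have "F2 / C2 * snd p < F2 / C2 * snd q" by (rule mult_strict_left_mono) (use assms pos in auto)
  ultimately show ?thesis
    using snd_field_free_flow[of p] snd_field_free_flow[of q] False assms(4) by auto
qed

lemma equilibrium_exists:
  obtains xb where "xb \<in> Omega B1 B2" "fst xb \<le> C1" "snd xb \<le> C2" "field xb = 0"
proof -
  \<comment> \<open>the free-flow state whose outflows equal the inflows \<open>min (\<phi> * R\<^sub>i) F\<^sub>i\<close>\<close>
  define G where "G p = (min (C1 / F1 * (\<phi> * R1 p)) C1, min (C2 / F2 * (\<phi> * R2 p)) C2)" for p
  have "continuous_on (Omega B1 B2) G" unfolding G_def by (intro continuous_intros R_continuous)
  moreover have "G \<in> Omega B1 B2 \<rightarrow> Omega B1 B2"
  proof
    fix p assume "p \<in> Omega B1 B2"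
    then have "0 \<le> C1 / F1 * (\<phi> * R1 p)" "0 \<le> C2 / F2 * (\<phi> * R2 p)" using R_nonneg pos by simp_all
    then show "G p \<in> Omega B1 B2" using pos by (auto simp: G_def mem_Omega_iff)
  qed
  moreover have "compact (Omega B1 B2)" "convex (Omega B1 B2)" "Omega B1 B2 \<noteq> {}"
    using pos by (auto simp: Omega_def intro!: compact_Times convex_Times)
  ultimately obtain xb where xb: "xb \<in> Omega B1 B2" "G xb = xb" using brouwer by metis
  have x1: "fst xb = min (C1 / F1 * (\<phi> * R1 xb)) C1" and x2: "snd xb = min (C2 / F2 * (\<phi> * R2 xb)) C2"
    using xb(2) by (metis G_def fst_conv, metis G_def snd_conv)
  have "F1 / C1 * fst xb = min (\<phi> * R1 xb) F1" "F2 / C2 * snd xb = min (\<phi> * R2 xb) F2"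
    unfolding x1 x2 using pos by (simp_all add: min_mult_distrib_left)
  then have "field xb = 0" using fst_field_free_flow[of xb] snd_field_free_flow[of xb] x1 x2
    by (simp add: prod_eq_iff)
  then show thesis using xb(1) x1 x2 by (intro that) simp_all
qed

lemma unique_equilibrium_globally_asymptotically_stable:
  "\<exists>xb\<in>Omega B1 B2. field xb = 0 \<and> (\<forall>y\<in>Omega B1 B2. field y = 0 \<longrightarrow> y = xb)
     \<and> (\<forall>\<epsilon>>0. \<exists>\<delta>>0. \<forall>x. is_solution field (Omega B1 B2) x \<and> dist (x 0) xb < \<delta>
           \<longrightarrow> (\<forall>t\<ge>0. dist (x t) xb < \<epsilon>))
     \<and> (\<forall>x. is_solution field (Omega B1 B2) x \<longrightarrow> (x \<longlongrightarrow> xb) at_top)"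
proof -
  obtain xb where xb: "xb \<in> Omega B1 B2" "fst xb \<le> C1" "snd xb \<le> C2" "field xb = 0"
    by (rule equilibrium_exists)
  interpret cooperative_system_with_equilibrium field B1 B2 xb
    by (intro cooperative_system_with_equilibrium.intro cooperative_system_axioms
        cooperative_system_with_equilibrium_axioms.intro)
      (use xb pos in \<open>simp_all add: field_comparison snd_field_strict\<close>)
  show ?thesis using xb equilibrium_unique equilibrium_stable solution_tendsto_equilibrium by blast
qed

end

section \<open>Monotonicity of the routing ratios\<close>

lemma nondecreasing_along_direction:
  fixes r :: "'a::real_normed_vector \<Rightarrow> real"
  assumes deriv: "\<forall>p\<in>T. (r has_derivative r' p) (at p within T)"
    and nonneg: "\<forall>p\<in>T. 0 \<le> r' p v"
    and line: "(\<lambda>\<sigma>. c + \<sigma> *\<^sub>R v) ` {s..s'} \<subseteq> T" and "s \<le> s'"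
  shows "r (c + s *\<^sub>R v) \<le> r (c + s' *\<^sub>R v)"
proof -
  have "((\<lambda>\<sigma>. r (c + \<sigma> *\<^sub>R v)) has_derivative (\<lambda>h. r' (c + \<sigma> *\<^sub>R v) (h *\<^sub>R v))) (at \<sigma> within {s..s'})"
    if "s \<le> \<sigma>" "\<sigma> \<le> s'" for \<sigma>
    by (rule has_derivative_in_compose2[of T r r']) (use deriv line that in \<open>auto intro!: derivative_eq_intros\<close>)
  from mvt_very_simple[OF \<open>s \<le> s'\<close> this] obtain \<sigma> where \<sigma>: "\<sigma> \<in> {s..s'}"
    and mvt: "r (c + s' *\<^sub>R v) - r (c + s *\<^sub>R v) = r' (c + \<sigma> *\<^sub>R v) ((s' - s) *\<^sub>R v)"
    by blast
  have p: "c + \<sigma> *\<^sub>R v \<in> T" using line \<sigma> by (auto simp: image_subset_iff)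
  then have "r' (c + \<sigma> *\<^sub>R v) ((s' - s) *\<^sub>R v) = (s' - s) * r' (c + \<sigma> *\<^sub>R v) v"
    using linear_cmul[OF has_derivative_linear] deriv by fastforce
  moreover have "0 \<le> (s' - s) * r' (c + \<sigma> *\<^sub>R v) v" using nonneg p \<open>s \<le> s'\<close> by simp
  ultimately show ?thesis using mvt by simp
qed

lemma Icc_subset_image_continuous:
  fixes \<tau> :: "real \<Rightarrow> real"
  assumes "continuous_on {y..y'} \<tau>" "y \<le> y'"
  shows "{\<tau> y..\<tau> y'} \<subseteq> \<tau> ` {y..y'}"
proof
  fix \<sigma> assume "\<sigma> \<in> {\<tau> y..\<tau> y'}"
  then obtain z where "y \<le> z" "z \<le> y'" "\<tau> z = \<sigma>" using IVT'[of \<tau> y \<sigma> y'] assms by auto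
  then show "\<sigma> \<in> \<tau> ` {y..y'}" by auto
qed

lemma routing_mono_snd:
  fixes r :: "real \<times> real \<Rightarrow> real" and \<tau>1 \<tau>2 :: "real \<Rightarrow> real"
  assumes "0 \<le> \<alpha>" and T: "(\<lambda>x. (\<tau>1 (fst x), \<tau>2 (snd x))) ` Omega B1 B2 \<subseteq> T"
    and deriv: "\<forall>p\<in>T. (r has_derivative r' p) (at p within T)" and cross: "\<forall>p\<in>T. 0 \<le> r' p (0, 1)"
    and \<tau>2: "continuous_on {0..B2} \<tau>2" "strict_mono_on {0..B2} \<tau>2"
    and pq: "p \<in> Omega B1 B2" "q \<in> Omega B1 B2" "p \<le> q" "fst p = fst q"
  shows "routing \<alpha> r0 r \<tau>1 \<tau>2 p \<le> routing \<alpha> r0 r \<tau>1 \<tau>2 q"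
proof -
  obtain a y y' where p: "p = (a, y)" and q: "q = (a, y')" using pq(4) by (metis prod.collapse)
  have y: "a \<in> {0..B1}" "0 \<le> y" "y \<le> y'" "y' \<le> B2" using pq by (auto simp: p q mem_Omega_iff)
  have "\<tau>2 y \<le> \<tau>2 y'" using strict_mono_on_leD[OF \<tau>2(2)] y by simp
  have seg: "{\<tau>2 y..\<tau>2 y'} \<subseteq> \<tau>2 ` {y..y'}"
    using Icc_subset_image_continuous[OF continuous_on_subset[OF \<tau>2(1)]] y by auto
  have "(\<lambda>\<sigma>. (\<tau>1 a, 0) + \<sigma> *\<^sub>R (0, 1)) ` {\<tau>2 y..\<tau>2 y'} \<subseteq> T"
  proof (rule image_subsetI)
    fix \<sigma> assume "\<sigma> \<in> {\<tau>2 y..\<tau>2 y'}"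
    then obtain z where z: "z \<in> {y..y'}" "\<sigma> = \<tau>2 z" using seg by auto
    then have "(a, z) \<in> Omega B1 B2" using y by (auto simp: mem_Omega_iff)
    then have "(\<tau>1 a, \<tau>2 z) \<in> T" using T by (metis (no_types, lifting) fst_conv snd_conv image_subset_iff)
    then show "(\<tau>1 a, 0) + \<sigma> *\<^sub>R (0, 1) \<in> T" using z by simp
  qed
  from nondecreasing_along_direction[OF deriv cross this \<open>\<tau>2 y \<le> \<tau>2 y'\<close>]
  have "r (\<tau>1 a, \<tau>2 y) \<le> r (\<tau>1 a, \<tau>2 y')" by simp
  then show ?thesis using \<open>0 \<le> \<alpha>\<close> by (simp add: routing_def p q mult_left_mono)
qed

lemma routing_mono_fst:
  fixes r :: "real \<times> real \<Rightarrow> real" and \<tau>1 \<tau>2 :: "real \<Rightarrow> real"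
  assumes "0 \<le> \<alpha>" and T: "(\<lambda>x. (\<tau>1 (fst x), \<tau>2 (snd x))) ` Omega B1 B2 \<subseteq> T"
    and deriv: "\<forall>p\<in>T. (r has_derivative r' p) (at p within T)" and cross: "\<forall>p\<in>T. 0 \<le> r' p (1, 0)"
    and \<tau>1: "continuous_on {0..B1} \<tau>1" "strict_mono_on {0..B1} \<tau>1"
    and pq: "p \<in> Omega B1 B2" "q \<in> Omega B1 B2" "p \<le> q" "snd p = snd q"
  shows "routing \<alpha> r0 r \<tau>1 \<tau>2 p \<le> routing \<alpha> r0 r \<tau>1 \<tau>2 q"
proof -
  obtain b y y' where p: "p = (y, b)" and q: "q = (y', b)" using pq(4) by (metis prod.collapse)
  have y: "b \<in> {0..B2}" "0 \<le> y" "y \<le> y'" "y' \<le> B1" using pq by (auto simp: p q mem_Omega_iff)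
  have "\<tau>1 y \<le> \<tau>1 y'" using strict_mono_on_leD[OF \<tau>1(2)] y by simp
  have seg: "{\<tau>1 y..\<tau>1 y'} \<subseteq> \<tau>1 ` {y..y'}"
    using Icc_subset_image_continuous[OF continuous_on_subset[OF \<tau>1(1)]] y by auto
  have "(\<lambda>\<sigma>. (0, \<tau>2 b) + \<sigma> *\<^sub>R (1, 0)) ` {\<tau>1 y..\<tau>1 y'} \<subseteq> T"
  proof (rule image_subsetI)
    fix \<sigma> assume "\<sigma> \<in> {\<tau>1 y..\<tau>1 y'}"
    then obtain z where z: "z \<in> {y..y'}" "\<sigma> = \<tau>1 z" using seg by auto
    then have "(z, b) \<in> Omega B1 B2" using y by (auto simp: mem_Omega_iff)
    then have "(\<tau>1 z, \<tau>2 b) \<in> T" using T by (metis (no_types, lifting) fst_conv snd_conv image_subset_iff)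
    then show "(0, \<tau>2 b) + \<sigma> *\<^sub>R (1, 0) \<in> T" using z by simp
  qed
  from nondecreasing_along_direction[OF deriv cross this \<open>\<tau>1 y \<le> \<tau>1 y'\<close>]
  have "r (\<tau>1 y, \<tau>2 b) \<le> r (\<tau>1 y', \<tau>2 b)" by simp
  then show ?thesis using \<open>0 \<le> \<alpha>\<close> by (simp add: routing_def p q mult_left_mono)
qed

lemma two_route_model_routing:
  fixes r1 r2 :: "real \<times> real \<Rightarrow> real" and \<tau>1 \<tau>2 :: "real \<Rightarrow> real"
  assumes pos: "0 < \<phi>" "0 < C1" "C1 < B1" "0 < F1" "0 < C2" "C2 < B2" "0 < F2"
    and alpha: "0 < \<alpha>" "\<alpha> \<le> 1" and r0: "0 \<le> r01" "0 \<le> r02" "r01 + r02 = 1"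
    and r_nonneg: "\<And>x. x \<in> Omega B1 B2 \<Longrightarrow> 0 \<le> r1 (\<tau>1 (fst x), \<tau>2 (snd x))"
      "\<And>x. x \<in> Omega B1 B2 \<Longrightarrow> 0 \<le> r2 (\<tau>1 (fst x), \<tau>2 (snd x))"
    and r_sum: "\<And>x. x \<in> Omega B1 B2 \<Longrightarrow> r1 (\<tau>1 (fst x), \<tau>2 (snd x)) + r2 (\<tau>1 (fst x), \<tau>2 (snd x)) = 1"
    and r_cont: "continuous_on (Omega B1 B2) (\<lambda>x. r1 (\<tau>1 (fst x), \<tau>2 (snd x)))"
      "continuous_on (Omega B1 B2) (\<lambda>x. r2 (\<tau>1 (fst x), \<tau>2 (snd x)))"
    and \<tau>: "continuous_on {0..B1} \<tau>1" "continuous_on {0..B2} \<tau>2"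
      "strict_mono_on {0..B1} \<tau>1" "strict_mono_on {0..B2} \<tau>2"
    and T: "(\<lambda>x. (\<tau>1 (fst x), \<tau>2 (snd x))) ` Omega B1 B2 \<subseteq> T"
    and deriv: "\<forall>p\<in>T. (r1 has_derivative r1' p) (at p within T)" "\<forall>p\<in>T. (r2 has_derivative r2' p) (at p within T)"
    and cross: "\<forall>p\<in>T. 0 \<le> r1' p (0, 1)" "\<forall>p\<in>T. 0 \<le> r2' p (1, 0)"
  shows "two_route_model \<phi> B1 C1 F1 B2 C2 F2 (routing \<alpha> r01 r1 \<tau>1 \<tau>2) (routing \<alpha> r02 r2 \<tau>1 \<tau>2)"
proof
  fix p assume p: "p \<in> Omega B1 B2"
  then show "0 \<le> routing \<alpha> r01 r1 \<tau>1 \<tau>2 p" "0 \<le> routing \<alpha> r02 r2 \<tau>1 \<tau>2 p"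
    using r_nonneg r0 alpha by (simp_all add: routing_def)
  have "routing \<alpha> r01 r1 \<tau>1 \<tau>2 p + routing \<alpha> r02 r2 \<tau>1 \<tau>2 p
      = (1 - \<alpha>) * (r01 + r02) + \<alpha> * (r1 (\<tau>1 (fst p), \<tau>2 (snd p)) + r2 (\<tau>1 (fst p), \<tau>2 (snd p)))"
    by (simp add: routing_def algebra_simps)
  then show "routing \<alpha> r01 r1 \<tau>1 \<tau>2 p + routing \<alpha> r02 r2 \<tau>1 \<tau>2 p = 1" using r_sum[OF p] r0(3) by simp
next
  show "continuous_on (Omega B1 B2) (routing \<alpha> r01 r1 \<tau>1 \<tau>2)"
    "continuous_on (Omega B1 B2) (routing \<alpha> r02 r2 \<tau>1 \<tau>2)"
    using r_cont unfolding routing_def by (auto intro!: continuous_intros)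
next
  fix p q assume "p \<in> Omega B1 B2" "q \<in> Omega B1 B2" "p \<le> q"
  then show "fst p = fst q \<Longrightarrow> routing \<alpha> r01 r1 \<tau>1 \<tau>2 p \<le> routing \<alpha> r01 r1 \<tau>1 \<tau>2 q"
    and "snd p = snd q \<Longrightarrow> routing \<alpha> r02 r2 \<tau>1 \<tau>2 p \<le> routing \<alpha> r02 r2 \<tau>1 \<tau>2 q"
    using routing_mono_snd[OF _ T deriv(1) cross(1) \<tau>(2,4)] routing_mono_fst[OF _ T deriv(2) cross(2) \<tau>(1,3)]
      alpha by auto
qed (use pos in auto)

theorem theorem2:
  fixes B1 C1 F1 B2 C2 F2 \<phi> \<alpha> r01 r02 :: real
    and \<tau>1 \<tau>2 \<tau>1' \<tau>2' :: "real \<Rightarrow> real"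
    and r1 r2 :: "real \<times> real \<Rightarrow> real"
    and r1' r2' :: "real \<times> real \<Rightarrow> real \<times> real \<Rightarrow> real"
    and d11 d12 d21 d22 :: "real \<times> real \<Rightarrow> real"
  defines "\<Omega> \<equiv> Omega B1 B2"
    and "T \<equiv> (\<lambda>x. (\<tau>1 (fst x), \<tau>2 (snd x))) ` Omega B1 B2"
    and "f \<equiv> two_route_field \<phi> B1 C1 F1 B2 C2 F2
               (routing \<alpha> r01 r1 \<tau>1 \<tau>2) (routing \<alpha> r02 r2 \<tau>1 \<tau>2)"
  assumes pos: "B1 > 0" "C1 > 0" "F1 > 0" "B2 > 0" "C2 > 0" "F2 > 0" "\<phi> > 0"
    and CB: "C1 < B1" "C2 < B2"
    and A1: "\<phi> < F1 + F2"
    and alpha: "0 < \<alpha>" "\<alpha> \<le> 1"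
    and r0: "r01 \<ge> 0" "r02 \<ge> 0" "r01 + r02 = 1"
    \<comment> \<open>(A2)-(A3): tau_i C^1 and strictly increasing\<close>
    and tau1_C1: "\<forall>s\<in>{0..B1}. (\<tau>1 has_real_derivative \<tau>1' s) (at s within {0..B1})"
                 "continuous_on {0..B1} \<tau>1'"
    and tau2_C1: "\<forall>s\<in>{0..B2}. (\<tau>2 has_real_derivative \<tau>2' s) (at s within {0..B2})"
                 "continuous_on {0..B2} \<tau>2'"
    and tau_mono: "strict_mono_on {0..B1} \<tau>1" "strict_mono_on {0..B2} \<tau>2"
    \<comment> \<open>(A2)-(A3): r_i(tau(x)) in [0,1], summing to 1 on Omega\<close>
    and r_range: "\<forall>x\<in>\<Omega>. 0 \<le> r1 (\<tau>1 (fst x), \<tau>2 (snd x)) \<and> r1 (\<tau>1 (fst x), \<tau>2 (snd x)) \<le> 1"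
                 "\<forall>x\<in>\<Omega>. 0 \<le> r2 (\<tau>1 (fst x), \<tau>2 (snd x)) \<and> r2 (\<tau>1 (fst x), \<tau>2 (snd x)) \<le> 1"
    and r_sum: "\<forall>x\<in>\<Omega>. r1 (\<tau>1 (fst x), \<tau>2 (snd x)) + r2 (\<tau>1 (fst x), \<tau>2 (snd x)) = 1"
    \<comment> \<open>(A2)-(A3): x \<mapsto> r_i(tau(x)) globally Lipschitz and C^1 on Omega\<close>
    and r_lip: "\<exists>L. L-lipschitz_on \<Omega> (\<lambda>x. r1 (\<tau>1 (fst x), \<tau>2 (snd x)))"
               "\<exists>L. L-lipschitz_on \<Omega> (\<lambda>x. r2 (\<tau>1 (fst x), \<tau>2 (snd x)))"
    and r1_C1: "\<forall>x\<in>\<Omega>. ((\<lambda>x. r1 (\<tau>1 (fst x), \<tau>2 (snd x))) has_derivative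
                          (\<lambda>h. d11 x * fst h + d12 x * snd h)) (at x within \<Omega>)"
               "continuous_on \<Omega> d11" "continuous_on \<Omega> d12"
    and r2_C1: "\<forall>x\<in>\<Omega>. ((\<lambda>x. r2 (\<tau>1 (fst x), \<tau>2 (snd x))) has_derivative
                          (\<lambda>h. d21 x * fst h + d22 x * snd h)) (at x within \<Omega>)"
               "continuous_on \<Omega> d21" "continuous_on \<Omega> d22"
    \<comment> \<open>(A4): dR_i/dtau_j > 0 for i \<noteq> j (on tau(Omega)), R_i = (1-alpha) r_i^0 + alpha r_i\<close>
    and A4_diff: "\<forall>p\<in>T. (r1 has_derivative r1' p) (at p within T)"
                 "\<forall>p\<in>T. (r2 has_derivative r2' p) (at p within T)"
    and A4: "\<forall>p\<in>T. \<alpha> * r1' p (0, 1) > 0" "\<forall>p\<in>T. \<alpha> * r2' p (1, 0) > 0"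
    and A5: "F1 > (1 - \<alpha>) * \<phi> * r01" "F2 > (1 - \<alpha>) * \<phi> * r02"
    and A6: "\<phi> < (F1 / C1) * B1" "\<phi> < (F2 / C2) * B2"
  shows "\<exists>xb\<in>\<Omega>. f xb = 0 \<and> (\<forall>y\<in>\<Omega>. f y = 0 \<longrightarrow> y = xb)
           \<and> (\<forall>\<epsilon>>0. \<exists>\<delta>>0. \<forall>x. is_solution f \<Omega> x \<and> dist (x 0) xb < \<delta>
                 \<longrightarrow> (\<forall>t\<ge>0. dist (x t) xb < \<epsilon>))
           \<and> (\<forall>x. is_solution f \<Omega> x \<longrightarrow> (x \<longlongrightarrow> xb) at_top)"
proof -
  have "continuous_on {0..B1} \<tau>1" "continuous_on {0..B2} \<tau>2"
    using tau1_C1(1) tau2_C1(1) by (auto intro!: DERIV_continuous_on)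
  moreover have "\<forall>p\<in>T. 0 \<le> r1' p (0, 1)" "\<forall>p\<in>T. 0 \<le> r2' p (1, 0)"
    using A4 alpha by (auto simp: zero_less_mult_iff)
  moreover have "(\<lambda>x. (\<tau>1 (fst x), \<tau>2 (snd x))) ` Omega B1 B2 \<subseteq> T" by (simp add: T_def)
  moreover have "continuous_on \<Omega> (\<lambda>x. r1 (\<tau>1 (fst x), \<tau>2 (snd x)))"
      "continuous_on \<Omega> (\<lambda>x. r2 (\<tau>1 (fst x), \<tau>2 (snd x)))"
    using r_lip lipschitz_on_continuous_on by blast+
  ultimately interpret two_route_model \<phi> B1 C1 F1 B2 C2 F2 "routing \<alpha> r01 r1 \<tau>1 \<tau>2" "routing \<alpha> r02 r2 \<tau>1 \<tau>2"
    using pos CB alpha r0 r_range r_sum tau_mono A4_diff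
    by (intro two_route_model_routing[where T = T and r1' = r1' and r2' = r2']) (auto simp: \<Omega>_def)
  show ?thesis using unique_equilibrium_globally_asymptotically_stable by (simp add: \<Omega>_def f_def)
qed

end
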